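(* Let $Q>1$ and $\epsilon>0$. Let $(X,d,\mu)$ be a $Q$-doubling metric measure space. Let $u:X\to\mathbb{R}$ be integrable on balls and let $g\in L^Q(X)$, $g\ge0$, be such that there exist constants $C>0$ and $\lambda\ge1$ with $$\frac{1}{\mu(B)}\int_B |u-u_B|\,d\mu\le C\,\operatorname{diam}(B)\left(\frac{1}{\mu(\lambda B)}\int_{\lambda B} g^Q\,d\mu\right)^{1/Q}$$ for every open ball $B\subset X$, where $u_B=\frac{1}{\mu(B)}\int_B u\,d\mu$. Then there is a set $E_\epsilon\subset X$ with $H^h(E_\epsilon)=0$, where $h(t)=\log^{-Q-\epsilon}(1/t)$, such that for every $x\in X\setminus E_\epsilon$ the limit $\lim_{r\to0}\frac{1}{\mu(B(x,r))}\int_{B(x,r)}u\,d\mu$ exists.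
   Context: $\mu$ is a Borel regular outer measure on $(X,d)$. $\mu$ is doubling if every ball has positive finite measure and $\mu(B(x,2r))\le C_\mu\mu(B(x,r))$ for all $x,r$. $(X,d,\mu)$ is $Q$-doubling if $\mu$ is doubling and there is $C\ge1$ with $(s/r)^Q\le C\,\mu(B(x,s))/\mu(B(a,r))$ whenever $a\in X$, $x\in B(a,r)$, $0<s\le r$. For $B=B(x,r)$, $\lambda B=B(x,\lambda r)$. $H^h(E)=\limsup_{\delta\to0}\inf\{\sum_i h(\operatorname{diam}(B_i)): E\subset\bigcup_i B_i,\ \operatorname{diam}(B_i)\le\delta\}$. *)

theory Defs
  imports "HOL-Analysis.Analysis"
begin

definition doubling_measure :: "'a::metric_space measure \<Rightarrow> bool" where
  "doubling_measure M \<longleftrightarrow>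
     (\<forall>x r. r > 0 \<longrightarrow> 0 < emeasure M (ball x r) \<and> emeasure M (ball x r) < \<infinity>) \<and>
     (\<exists>C. \<forall>x r. r > 0 \<longrightarrow> measure M (ball x (2 * r)) \<le> C * measure M (ball x r))"

definition Q_doubling :: "real \<Rightarrow> 'a::metric_space measure \<Rightarrow> bool" where
  "Q_doubling Q M \<longleftrightarrow> doubling_measure M \<and>
     (\<exists>C\<ge>1. \<forall>a x r s. x \<in> ball a r \<and> 0 < s \<and> s \<le> r \<longrightarrow>
        (s / r) powr Q \<le> C * measure M (ball x s) / measure M (ball a r))"

definition avg :: "'a measure \<Rightarrow> 'a set \<Rightarrow> ('a \<Rightarrow> real) \<Rightarrow> real" where
  "avg M B u = (LINT y:B|M. u y) / measure M B"

text \<open>Finite covers are included since the empty set is a ball (of nonpositive radius)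
  with diameter 0, and h 0 = 0 for the gauges used here.\<close>
definition hausdorff_h :: "(real \<Rightarrow> real) \<Rightarrow> 'a::metric_space set \<Rightarrow> ennreal" where
  "hausdorff_h h E = Limsup (at_right (0::real)) (\<lambda>\<delta>.
     INF B \<in> {B :: nat \<Rightarrow> 'a set. (\<forall>i. \<exists>x r. B i = ball x r) \<and> E \<subseteq> (\<Union>i. B i)
                 \<and> (\<forall>i. diameter (B i) \<le> \<delta>)}.
       (\<Sum>i. ennreal (h (diameter (B i)))))"

text \<open>The gauge h(t) = log^(-Q-eps)(1/t) for 0 < t < 1, extended by h(t) = 0 for t \<le> 0
  (its limit at 0); the value for t \<ge> 1 is irrelevant as delta tends to 0.\<close>
definition log_gauge :: "real \<Rightarrow> real \<Rightarrow> real \<Rightarrow> real" where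
  "log_gauge Q \<epsilon> t = (if t \<le> 0 then 0 else if t < 1 then ln (1 / t) powr (- Q - \<epsilon>) else 1)"

end

theory Submission
  imports Defs
begin

(*
  Averages along dyadic radii are chained: by the Poincare inequality and the lower mass
  bound mu(B(x,rho)) >= c rho^Q of a Q-doubling measure, consecutive averages differ by
  at most K (integral of g^Q over B(x, lam r))^(1/Q).  Hence the averages converge at x as
  soon as these quantities are summable over r = 2^-k, and by Cauchy condensation it
  suffices that the integral over B(x, lam 2^(-2^j)) is eventually below 2^(-(Q+eps/2) j).
  The points where this fails infinitely often are, for each j, covered by at most
  ||g||_Q^Q 2^((Q+eps/2) j) balls of radius 2 lam 2^(-2^j) centred at a maximal separated
  set of bad points, and the gauge of such a ball is about 2^(-(Q+eps) j); the cost of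
  these covers is therefore summable, so the exceptional set is h-null.
*)

section \<open>Hausdorff null sets from summable ball covers\<close>

lemma hausdorff_h_eq_0I:
  fixes E :: "'a::metric_space set"
  assumes "\<And>\<delta> \<eta>. \<delta> > 0 \<Longrightarrow> \<eta> > 0 \<Longrightarrow> \<exists>B::nat \<Rightarrow> 'a set. (\<forall>i. \<exists>x r. B i = ball x r) \<and>
             E \<subseteq> (\<Union>i. B i) \<and> (\<forall>i. diameter (B i) \<le> \<delta>) \<and>
             (\<Sum>i. ennreal (h (diameter (B i)))) \<le> ennreal \<eta>"
  shows "hausdorff_h h E = 0"
proof -
  have inf_0: "(INF B \<in> {B :: nat \<Rightarrow> 'a set. (\<forall>i. \<exists>x r. B i = ball x r) \<and> E \<subseteq> (\<Union>i. B i)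
                 \<and> (\<forall>i. diameter (B i) \<le> \<delta>)}. (\<Sum>i. ennreal (h (diameter (B i))))) = 0"
    if "\<delta> > 0" for \<delta>
  proof -
    have "(INF B \<in> {B :: nat \<Rightarrow> 'a set. (\<forall>i. \<exists>x r. B i = ball x r) \<and> E \<subseteq> (\<Union>i. B i)
                 \<and> (\<forall>i. diameter (B i) \<le> \<delta>)}. (\<Sum>i. ennreal (h (diameter (B i))))) \<le> 0 + ennreal \<eta>"
      if "\<eta> > 0" for \<eta>
      using assms[OF \<open>\<delta> > 0\<close> \<open>\<eta> > 0\<close>] by (auto intro: INF_lower2)
    then show ?thesis by (meson ennreal_le_epsilon le_zero_eq)
  qed
  have "hausdorff_h h E = Limsup (at_right (0::real)) (\<lambda>_. 0::ennreal)"
    unfolding hausdorff_h_def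
    by (rule Limsup_eq, rule eventually_mono[OF eventually_at_right_less[of 0]]) (use inf_0 in auto)
  then show ?thesis by (simp add: Limsup_const)
qed

lemma diameter_ball_le:
  fixes x :: "'a::metric_space"
  assumes "r \<ge> 0"
  shows "diameter (ball x r) \<le> 2 * r"
proof (cases "ball x r = {}")
  case False
  have "dist a b \<le> 2 * r" if "dist x a < r" "dist x b < r" for a b
    using that dist_triangle[of a b x] by (simp add: dist_commute)
  with False show ?thesis
    unfolding diameter_def by (auto intro!: cSUP_least)
qed (use assms in simp)

lemma ex_enumeration_of_ball_families:
  fixes F :: "nat \<Rightarrow> 'a::metric_space set" and r :: "nat \<Rightarrow> real"
    and f :: "'a set \<Rightarrow> ennreal" and w :: "nat \<Rightarrow> ennreal"
  assumes fin: "\<And>j. finite (F j)" and f_empty: "f {} = 0"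
    and f_le: "\<And>j c. c \<in> F j \<Longrightarrow> f (ball c (r j)) \<le> w j"
  obtains B :: "nat \<Rightarrow> 'a set" where
    "\<And>n. B n = {} \<or> (\<exists>j. \<exists>c\<in>F j. B n = ball c (r j))"
    "(\<Union>j. \<Union>c\<in>F j. ball c (r j)) \<subseteq> (\<Union>n. B n)"
    "(\<Sum>n. f (B n)) \<le> (\<Sum>j. of_nat (card (F j)) * w j)"
proof -
  have "\<forall>j. \<exists>e. bij_betw e {0..<card (F j)} (F j)"
    using fin ex_bij_betw_nat_finite by blast
  then obtain e where e: "\<And>j. bij_betw (e j) {0..<card (F j)} (F j)" by metis
  then have e_in: "e j i \<in> F j" if "i < card (F j)" for i j
    using that bij_betwE[OF e[of j]] by simp
  define B where "B n = (case prod_decode n of (j, i) \<Rightarrow>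
      if i < card (F j) then ball (e j i) (r j) else {})" for n
  define v where "v = (\<lambda>(j, i). if i < card (F j) then w j else 0)"
  have "B n = {} \<or> (\<exists>j. \<exists>c\<in>F j. B n = ball c (r j))" for n
    using e_in by (auto simp: B_def split: prod.split)
  moreover have "(\<Union>j. \<Union>c\<in>F j. ball c (r j)) \<subseteq> (\<Union>n. B n)"
  proof clarify
    fix x j c assume "c \<in> F j" "x \<in> ball c (r j)"
    moreover obtain i where "i < card (F j)" "e j i = c"
      using e[of j] \<open>c \<in> F j\<close> unfolding bij_betw_def by (metis atLeastLessThan_iff imageE)
    ultimately have "x \<in> B (prod_encode (j, i))" by (simp add: B_def)
    then show "x \<in> (\<Union>n. B n)" by blast
  qed
  moreover have "(\<Sum>n. f (B n)) \<le> (\<Sum>j. of_nat (card (F j)) * w j)"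
  proof -
    have row: "(\<Sum>i. v (j, i)) = of_nat (card (F j)) * w j" for j
    proof -
      have "(\<Sum>i. v (j, i)) = (\<Sum>i<card (F j). v (j, i))"
        by (rule suminf_finite) (auto simp: v_def)
      then show ?thesis by (simp add: v_def)
    qed
    have "f (B n) \<le> v (prod_decode n)" for n
      using f_le e_in f_empty by (auto simp: B_def v_def split: prod.split)
    then have "(\<Sum>n. f (B n)) \<le> (\<Sum>n. v (prod_decode n))"
      by (intro suminf_le summableI)
    also have "\<dots> = (\<Sum>j. \<Sum>i. v (j, i))"
      by (rule suminf_ennreal_2dimen) simp
    finally show ?thesis by (simp add: row)
  qed
  ultimately show ?thesis using that by blast
qed

text \<open>Borel--Cantelli for covers: the tails of the sequence of unions are admissible covers,
  and their \<open>h\<close>-cost is a tail of a convergent series.\<close>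
lemma hausdorff_h_limsup_balls_eq_0:
  fixes F :: "nat \<Rightarrow> 'a::metric_space set" and \<rho> :: "nat \<Rightarrow> real" and h :: "real \<Rightarrow> real"
  assumes h0: "h 0 = 0" and h_nonneg: "\<And>t. 0 \<le> h t" and "\<tau> > 0" and h_mono: "mono_on {0..<\<tau>} h"
    and \<rho>_pos: "\<And>j. \<rho> j > 0" and \<rho>_lim: "\<rho> \<longlonglongrightarrow> 0" and fin: "\<And>j. finite (F j)"
    and summ: "summable (\<lambda>j. real (card (F j)) * h (2 * \<rho> j))"
    and E: "\<And>x. x \<in> E \<Longrightarrow> \<exists>\<^sub>F j in sequentially. x \<in> (\<Union>c\<in>F j. ball c (\<rho> j))"
  shows "hausdorff_h h E = 0"
proof (rule hausdorff_h_eq_0I)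
  fix \<delta> \<eta> :: real assume "\<delta> > 0" "\<eta> > 0"
  have "\<forall>\<^sub>F j in sequentially. 2 * \<rho> j < min \<delta> \<tau>"
    using \<rho>_lim \<open>\<delta> > 0\<close> \<open>\<tau> > 0\<close> by (intro order_tendstoD) (auto intro!: tendsto_eq_intros)
  then obtain J1 where J1: "\<And>j. j \<ge> J1 \<Longrightarrow> 2 * \<rho> j < min \<delta> \<tau>"
    by (auto simp: eventually_sequentially)
  obtain J2 where J2: "\<And>n. n \<ge> J2 \<Longrightarrow> norm (\<Sum>j. real (card (F (j + n))) * h (2 * \<rho> (j + n))) < \<eta>"
    using suminf_exist_split[OF \<open>\<eta> > 0\<close> summ] by blast
  define J where "J = max J1 J2"
  have ball_diam: "diameter (ball c (\<rho> (j + J))) \<le> 2 * \<rho> (j + J)" for c j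
    using diameter_ball_le \<rho>_pos less_imp_le by blast
  have cost_le: "ennreal (h (diameter (ball c (\<rho> (j + J))))) \<le> ennreal (h (2 * \<rho> (j + J)))" for c j
  proof (intro ennreal_leI mono_onD[OF h_mono])
    have "2 * \<rho> (j + J) < \<tau>" using J1[of "j + J"] by (simp add: J_def)
    then show "diameter (ball c (\<rho> (j + J))) \<in> {0..<\<tau>}" "2 * \<rho> (j + J) \<in> {0..<\<tau>}"
      using ball_diam[of c j] \<rho>_pos[of "j + J"] diameter_ge_0[of "ball c (\<rho> (j + J))"] by auto
  qed (rule ball_diam)
  obtain B :: "nat \<Rightarrow> 'a set" where
    B: "\<And>n. B n = {} \<or> (\<exists>j. \<exists>c\<in>F (j + J). B n = ball c (\<rho> (j + J)))"
    and B_cover: "(\<Union>j. \<Union>c\<in>F (j + J). ball c (\<rho> (j + J))) \<subseteq> (\<Union>n. B n)"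
    and B_cost: "(\<Sum>n. ennreal (h (diameter (B n))))
                   \<le> (\<Sum>j. of_nat (card (F (j + J))) * ennreal (h (2 * \<rho> (j + J))))"
    by (rule ex_enumeration_of_ball_families[where F = "\<lambda>j. F (j + J)" and r = "\<lambda>j. \<rho> (j + J)"
        and f = "\<lambda>B. ennreal (h (diameter B))" and w = "\<lambda>j. ennreal (h (2 * \<rho> (j + J)))"])
       (use fin h0 cost_le in auto)
  show "\<exists>B::nat \<Rightarrow> 'a set. (\<forall>i. \<exists>x r. B i = ball x r) \<and> E \<subseteq> (\<Union>i. B i) \<and>
          (\<forall>i. diameter (B i) \<le> \<delta>) \<and> (\<Sum>i. ennreal (h (diameter (B i)))) \<le> ennreal \<eta>"
  proof (intro exI[of _ B] conjI allI)
    fix n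
    have "\<exists>x r. ({}::'a set) = ball x r" by (metis ball_eq_empty order_refl)
    then show "\<exists>x r. B n = ball x r" using B[of n] by auto
    show "diameter (B n) \<le> \<delta>"
    proof (cases "B n = {}")
      case False
      then obtain j c where "B n = ball c (\<rho> (j + J))" using B[of n] by blast
      moreover have "2 * \<rho> (j + J) < \<delta>" using J1[of "j + J"] by (simp add: J_def)
      ultimately show ?thesis using ball_diam[of c j] by simp
    qed (use \<open>\<delta> > 0\<close> in simp)
  next
    show "E \<subseteq> (\<Union>i. B i)"
    proof
      fix x assume "x \<in> E"
      then obtain j c where "j \<ge> J" "c \<in> F j" "x \<in> ball c (\<rho> j)"
        using E unfolding frequently_sequentially by blast
      then have "x \<in> (\<Union>j. \<Union>c\<in>F (j + J). ball c (\<rho> (j + J)))"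
        by (intro UN_I[of "j - J"]) auto
      then show "x \<in> (\<Union>i. B i)" using B_cover by blast
    qed
  next
    have "(\<Sum>j. of_nat (card (F (j + J))) * ennreal (h (2 * \<rho> (j + J))))
          = ennreal (\<Sum>j. real (card (F (j + J))) * h (2 * \<rho> (j + J)))"
      using h_nonneg summable_ignore_initial_segment[OF summ]
      by (subst suminf_ennreal2[symmetric]) (auto simp: ennreal_mult ennreal_of_nat_eq_real_of_nat)
    also have "\<dots> \<le> ennreal \<eta>"
      using J2[of J] by (intro ennreal_leI) (simp add: J_def)
    finally show "(\<Sum>i. ennreal (h (diameter (B i)))) \<le> ennreal \<eta>"
      using B_cost by simp
  qed
qed

section \<open>The exceptional set\<close>

lemma sum_set_integral_separated_balls_le:
  fixes M :: "'a::metric_space measure" and f :: "'a \<Rightarrow> real"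
  assumes "integrable M f" "\<And>x. f x \<ge> 0" "sets borel \<subseteq> sets M" "finite F"
    and sep: "\<And>a b. a \<in> F \<Longrightarrow> b \<in> F \<Longrightarrow> a \<noteq> b \<Longrightarrow> 2 * t \<le> dist a b"
  shows "(\<Sum>c\<in>F. LINT y:ball c t|M. f y) \<le> integral\<^sup>L M f"
proof -
  have int: "integrable M (\<lambda>y. indicator (ball c t) y * f y)" for c
  proof -
    have "ball c t \<in> sets M" using assms(3) by auto
    then show ?thesis using integrable_mult_indicator[OF _ assms(1)] by simp
  qed
  have "(\<Sum>c\<in>F. LINT y:ball c t|M. f y) = \<integral>y. (\<Sum>c\<in>F. indicator (ball c t) y * f y) \<partial>M"
    using int by (simp add: set_lebesgue_integral_def Bochner_Integration.integral_sum)
  also have "\<dots> \<le> integral\<^sup>L M f"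
  proof (rule integral_mono)
    fix y
    have "card {c\<in>F. y \<in> ball c t} \<le> Suc 0"
    proof (subst card_le_Suc0_iff_eq)
      show "finite {c\<in>F. y \<in> ball c t}" using assms(4) by simp
      show "\<forall>a\<in>{c\<in>F. y \<in> ball c t}. \<forall>b\<in>{c\<in>F. y \<in> ball c t}. a = b"
      proof (intro ballI, rule ccontr)
        fix a b assume ab: "a \<in> {c\<in>F. y \<in> ball c t}" "b \<in> {c\<in>F. y \<in> ball c t}" "a \<noteq> b"
        then have "2 * t \<le> dist a b" using sep by auto
        with ab dist_triangle[of a b y] show False by (simp add: dist_commute)
      qed
    qed
    moreover have "(\<Sum>c\<in>F. indicator (ball c t) y * f y) = real (card {c\<in>F. y \<in> ball c t}) * f y"
      using assms(4) by (simp add: sum_distrib_right[symmetric] indicator_def sum.If_cases Int_def conj_commute)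
    ultimately show "(\<Sum>c\<in>F. indicator (ball c t) y * f y) \<le> f y"
      using assms(2)[of y] mult_right_mono[of "real (card {c\<in>F. y \<in> ball c t})" 1 "f y"] by simp
  qed (use int assms(1) in auto)
  finally show ?thesis .
qed

text \<open>A maximal \<open>2t\<close>-separated subset of the points carrying mass \<open>\<theta>\<close> on their \<open>t\<close>-ball:
  it exists because separated sets have at most \<open>\<integral>f / \<theta>\<close> elements, and by maximality the
  doubled balls around it cover all such points.\<close>
lemma separated_cover_of_heavy_points:
  fixes M :: "'a::metric_space measure" and f :: "'a \<Rightarrow> real"
  assumes "integrable M f" "\<And>x. f x \<ge> 0" "sets borel \<subseteq> sets M" "\<theta> > 0" "t > 0"
  obtains F where "finite F" "real (card F) * \<theta> \<le> integral\<^sup>L M f"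
    "{x. \<theta> \<le> (LINT y:ball x t|M. f y)} \<subseteq> (\<Union>c\<in>F. ball c (2 * t))"
proof -
  define A where "A = {x. \<theta> \<le> (LINT y:ball x t|M. f y)}"
  define sep where "sep F \<longleftrightarrow> finite F \<and> F \<subseteq> A \<and> (\<forall>a\<in>F. \<forall>b\<in>F. a \<noteq> b \<longrightarrow> 2 * t \<le> dist a b)"
    for F
  have card_bound: "real (card F) * \<theta> \<le> integral\<^sup>L M f" if "sep F" for F
  proof -
    have "real (card F) * \<theta> = (\<Sum>c\<in>F. \<theta>)" by simp
    also have "\<dots> \<le> (\<Sum>c\<in>F. LINT y:ball c t|M. f y)"
      using that by (intro sum_mono) (auto simp: sep_def A_def)
    also have "\<dots> \<le> integral\<^sup>L M f"
      using that by (intro sum_set_integral_separated_balls_le assms) (auto simp: sep_def)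
    finally show ?thesis .
  qed
  have "card F < nat \<lceil>integral\<^sup>L M f / \<theta>\<rceil> + 1" if "sep F" for F
  proof -
    have "real (card F) \<le> integral\<^sup>L M f / \<theta>"
      using card_bound[OF that] \<open>\<theta> > 0\<close> by (simp add: field_simps)
    then show ?thesis by linarith
  qed
  moreover have "sep {}" by (simp add: sep_def)
  ultimately obtain F where F: "sep F" and F_max: "\<And>F'. sep F' \<Longrightarrow> card F' \<le> card F"
    using ex_has_greatest_nat[of sep "{}" card] by blast
  have "A \<subseteq> (\<Union>c\<in>F. ball c (2 * t))"
  proof
    fix x assume x: "x \<in> A"
    show "x \<in> (\<Union>c\<in>F. ball c (2 * t))"
    proof (rule ccontr)
      assume far: "x \<notin> (\<Union>c\<in>F. ball c (2 * t))"
      then have "x \<notin> F" using \<open>t > 0\<close> by auto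
      moreover have "sep (insert x F)" using F x far by (auto simp: sep_def dist_commute)
      ultimately show False using F_max[of "insert x F"] F by (simp add: sep_def)
    qed
  qed
  then show ?thesis using that F card_bound by (auto simp: sep_def A_def)
qed

lemma log_gauge_nonneg: "log_gauge Q \<epsilon> t \<ge> 0"
  by (simp add: log_gauge_def)

lemma mono_on_log_gauge:
  assumes "Q + \<epsilon> > 0"
  shows "mono_on {0..<1} (log_gauge Q \<epsilon>)"
proof (rule mono_onI)
  fix a b :: real assume ab: "a \<in> {0..<1}" "b \<in> {0..<1}" "a \<le> b"
  show "log_gauge Q \<epsilon> a \<le> log_gauge Q \<epsilon> b"
  proof (cases "a = 0")
    case True then show ?thesis by (simp add: log_gauge_def)
  next
    case False
    then have "0 < ln (1/b)" "ln (1/b) \<le> ln (1/a)" using ab by (auto simp: frac_le)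
    then have "ln (1/a) powr (-Q-\<epsilon>) \<le> ln (1/b) powr (-Q-\<epsilon>)"
      using assms by (intro powr_mono2') auto
    then show ?thesis using False ab by (simp add: log_gauge_def)
  qed
qed

lemma log_gauge_double_dyadic_le:
  fixes Q \<epsilon> lam :: real
  assumes "Q + \<epsilon> > 0" "lam \<ge> 1" "real (2^j) \<ge> 4 * ln (4 * lam)"
  shows "log_gauge Q \<epsilon> (4 * lam * (1/2)^(2^j)) \<le> 4 powr (Q + \<epsilon>) * 2 powr (-(Q + \<epsilon>) * real j)"
proof -
  define N :: nat where "N = 2^j"
  define t where "t = 4 * lam * (1/2)^N"
  have N: "real N \<ge> 4 * ln (4 * lam)" "real N > 0" using assms by (simp_all add: N_def)
  have t: "t > 0" using assms by (simp add: t_def)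
  have "ln (1/t) = real N * ln 2 - ln (4 * lam)"
    using assms by (simp add: t_def field_simps power_one_over ln_div ln_realpow)
  moreover have "real N * ln 2 \<ge> real N * (2/3)" using ln2_ge_two_thirds N by simp
  ultimately have ln_t: "ln (1/t) \<ge> real N / 4" using N by linarith
  have "t < 1"
  proof (rule ccontr)
    assume "\<not> t < 1"
    then have "ln (1/t) \<le> 0" by simp
    with ln_t N show False by linarith
  qed
  then have "log_gauge Q \<epsilon> t = ln (1/t) powr (-Q-\<epsilon>)"
    using t by (simp add: log_gauge_def)
  also have "\<dots> \<le> (real N / 4) powr (-Q-\<epsilon>)"
    using ln_t N assms by (intro powr_mono2') auto
  also have "\<dots> = 4 powr (Q + \<epsilon>) * real N powr (-Q-\<epsilon>)"
    using N by (simp add: powr_divide powr_minus divide_simps powr_add[symmetric])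
  also have "real N powr (-Q-\<epsilon>) = 2 powr (-(Q + \<epsilon>) * real j)"
    by (simp add: N_def powr_realpow[symmetric] powr_powr mult.commute)
  finally show ?thesis by (simp add: t_def N_def)
qed

lemma summable_card_mul_log_gauge:
  fixes N :: "nat \<Rightarrow> nat" and Q \<epsilon> lam G :: real
  assumes "Q > 0" "\<epsilon> > 0" "lam \<ge> 1"
    and N: "\<And>j. real (N j) * 2 powr (-(Q + \<epsilon>/2) * real j) \<le> G"
  shows "summable (\<lambda>j. real (N j) * log_gauge Q \<epsilon> (4 * lam * (1/2)^(2^j)))"
proof (rule summable_comparison_test_ev)
  define w where "w j = 4 powr (Q + \<epsilon>) * G * (2 powr (-(\<epsilon>/2))) ^ j" for j
  show "summable w"
    unfolding w_def using \<open>\<epsilon> > 0\<close>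
    by (intro summable_mult summable_geometric) (simp add: powr_minus field_simps)
  show "\<forall>\<^sub>F j in sequentially. norm (real (N j) * log_gauge Q \<epsilon> (4 * lam * (1/2)^(2^j))) \<le> w j"
  proof (rule eventually_mono[OF eventually_ge_at_top[of "nat \<lceil>4 * ln (4 * lam)\<rceil>"]])
    fix j assume "nat \<lceil>4 * ln (4 * lam)\<rceil> \<le> j"
    then have "4 * ln (4 * lam) \<le> real (2^j)"
      using less_exp[of j] by linarith
    then have "log_gauge Q \<epsilon> (4 * lam * (1/2)^(2^j)) \<le> 4 powr (Q + \<epsilon>) * 2 powr (-(Q + \<epsilon>) * real j)"
      using log_gauge_double_dyadic_le assms by simp
    moreover have "real (N j) \<le> G / 2 powr (-(Q + \<epsilon>/2) * real j)"
      using N[of j] by (simp add: field_simps)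
    ultimately have "real (N j) * log_gauge Q \<epsilon> (4 * lam * (1/2)^(2^j))
        \<le> G / 2 powr (-(Q + \<epsilon>/2) * real j) * (4 powr (Q + \<epsilon>) * 2 powr (-(Q + \<epsilon>) * real j))"
      by (intro mult_mono) (auto simp: log_gauge_nonneg)
    also have "\<dots> = 4 powr (Q + \<epsilon>) * G * (2 powr (-(Q + \<epsilon>) * real j) / 2 powr (-(Q + \<epsilon>/2) * real j))"
      by simp
    also have "2 powr (-(Q + \<epsilon>) * real j) / 2 powr (-(Q + \<epsilon>/2) * real j) = (2 powr (-(\<epsilon>/2))) ^ j"
      by (simp add: powr_diff[symmetric] powr_power algebra_simps)
    finally show "norm (real (N j) * log_gauge Q \<epsilon> (4 * lam * (1/2)^(2^j))) \<le> w j"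
      using log_gauge_nonneg by (simp add: w_def)
  qed
qed

lemma hausdorff_h_heavy_points_eq_0:
  fixes M :: "'a::metric_space measure" and f :: "'a \<Rightarrow> real" and Q \<epsilon> lam :: real
  assumes f: "integrable M f" "\<And>x. f x \<ge> 0" and "sets borel \<subseteq> sets M"
    and "Q > 0" "\<epsilon> > 0" "lam \<ge> 1"
  shows "hausdorff_h (log_gauge Q \<epsilon>)
     {x. \<exists>\<^sub>F j in sequentially. 2 powr (-(Q + \<epsilon>/2) * real j) \<le> (LINT y:ball x (lam * (1/2)^(2^j))|M. f y)} = 0"
proof -
  define t where "t j = lam * (1/2::real)^(2^j)" for j :: nat
  define \<theta> where "\<theta> j = 2 powr (-(Q + \<epsilon>/2) * real j)" for j :: nat
  have t_pos: "t j > 0" for j using \<open>lam \<ge> 1\<close> by (simp add: t_def)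
  have "\<forall>j. \<exists>F. finite F \<and> real (card F) * \<theta> j \<le> integral\<^sup>L M f \<and>
              {x. \<theta> j \<le> (LINT y:ball x (t j)|M. f y)} \<subseteq> (\<Union>c\<in>F. ball c (2 * t j))"
  proof
    fix j
    have "\<theta> j > 0" by (simp add: \<theta>_def)
    then show "\<exists>F. finite F \<and> real (card F) * \<theta> j \<le> integral\<^sup>L M f \<and>
              {x. \<theta> j \<le> (LINT y:ball x (t j)|M. f y)} \<subseteq> (\<Union>c\<in>F. ball c (2 * t j))"
      using separated_cover_of_heavy_points[OF f assms(3) _ t_pos] by metis
  qed
  then obtain F where F_fin: "\<And>j. finite (F j)"
    and F_card: "\<And>j. real (card (F j)) * \<theta> j \<le> integral\<^sup>L M f"
    and F_cover: "\<And>j. {x. \<theta> j \<le> (LINT y:ball x (t j)|M. f y)} \<subseteq> (\<Union>c\<in>F j. ball c (2 * t j))"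
    by metis
  show ?thesis
  proof (rule hausdorff_h_limsup_balls_eq_0[where \<rho> = "\<lambda>j. 2 * t j" and F = F and \<tau> = 1])
    show "mono_on {0..<1} (log_gauge Q \<epsilon>)" using assms by (intro mono_on_log_gauge) simp
    have "(\<lambda>j. (1/2::real) ^ (2^j)) \<longlonglongrightarrow> 0"
      using LIMSEQ_subseq_LIMSEQ[OF LIMSEQ_power_zero[of "1/2::real"], of "\<lambda>j. 2^j"]
      by (simp add: strict_mono_def o_def)
    then show "(\<lambda>j. 2 * t j) \<longlonglongrightarrow> 0"
      unfolding t_def by (intro tendsto_mult_right_zero)
    show "summable (\<lambda>j. real (card (F j)) * log_gauge Q \<epsilon> (2 * (2 * t j)))"
      using summable_card_mul_log_gauge[OF assms(4-6) F_card[unfolded \<theta>_def]]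
      by (simp add: t_def mult.assoc)
    show "\<exists>\<^sub>F j in sequentially. x \<in> (\<Union>c\<in>F j. ball c (2 * t j))"
      if "x \<in> {x. \<exists>\<^sub>F j in sequentially. 2 powr (-(Q + \<epsilon>/2) * real j) \<le>
                  (LINT y:ball x (lam * (1/2)^(2^j))|M. f y)}" for x
    proof -
      have "x \<in> (\<Union>c\<in>F j. ball c (2 * t j))" if "\<theta> j \<le> (LINT y:ball x (t j)|M. f y)" for j
        using F_cover[of j] that by blast
      with that show ?thesis unfolding t_def \<theta>_def by (auto elim!: frequently_elim1)
    qed
  qed (auto simp: log_gauge_def t_pos F_fin)
qed

section \<open>Oscillation of ball averages\<close>

lemma set_integral_mono_set_nonneg:
  fixes f :: "_ \<Rightarrow> real"
  assumes "set_integrable M A f" "B \<in> sets M" "B \<subseteq> A" "\<And>x. x \<in> A \<Longrightarrow> f x \<ge> 0"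
  shows "(LINT x:B|M. f x) \<le> (LINT x:A|M. f x)"
  using assms set_integrable_subset[OF assms(1-3)]
  unfolding set_lebesgue_integral_def set_integrable_def
  by (intro integral_mono) (auto simp: indicator_def)

lemma doubling_measure_ball:
  assumes "doubling_measure M" "r > 0"
  shows "0 < measure M (ball x r)" "emeasure M (ball x r) < \<infinity>"
  using assms by (auto simp: doubling_measure_def measure_def enn2real_positive_iff)

lemma avg_ball_diff_le:
  fixes M :: "'a::metric_space measure" and u :: "'a \<Rightarrow> real"
  assumes sb: "sets borel \<subseteq> sets M" and D: "doubling_measure M"
    and u: "set_integrable M (ball x r) u" and "0 < s" "s \<le> r"
  shows "\<bar>avg M (ball x s) u - avg M (ball x r) u\<bar> \<le>
     (LINT y:ball x r|M. \<bar>u y - avg M (ball x r) u\<bar>) / measure M (ball x s)"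
proof -
  define c where "c = avg M (ball x r) u"
  have meas: "ball x \<rho> \<in> sets M" for \<rho> using sb by auto
  have sub: "ball x s \<subseteq> ball x r" using \<open>s \<le> r\<close> by auto
  have ms: "measure M (ball x s) > 0" using doubling_measure_ball[OF D \<open>0 < s\<close>] by simp
  have c_int: "set_integrable M (ball x r) (\<lambda>_. c)"
    using doubling_measure_ball[OF D, of r x] \<open>0 < s\<close> \<open>s \<le> r\<close> meas[of r]
    unfolding set_integrable_def using integrable_indicator[of "ball x r" M c] by simp
  have uc_int: "set_integrable M (ball x r) (\<lambda>y. u y - c)"
    using u c_int by (rule set_integral_diff(1))
  have "(LINT y:ball x s|M. u y - c) = (LINT y:ball x s|M. u y) - measure M (ball x s) * c"
    using set_integral_diff(2)[OF set_integrable_subset[OF u meas sub] set_integrable_subset[OF c_int meas sub]]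
      set_integral_const[OF meas, of s c] doubling_measure_ball(2)[OF D \<open>0 < s\<close>, of x]
    by (simp add: less_top)
  then have "avg M (ball x s) u - c = (LINT y:ball x s|M. u y - c) / measure M (ball x s)"
    using ms by (simp add: avg_def field_simps)
  also have "\<bar>\<dots>\<bar> \<le> (LINT y:ball x s|M. \<bar>u y - c\<bar>) / measure M (ball x s)"
    using set_integral_norm_bound[OF set_integrable_subset[OF uc_int meas sub]] ms
    by (simp add: abs_div divide_right_mono)
  also have "\<dots> \<le> (LINT y:ball x r|M. \<bar>u y - c\<bar>) / measure M (ball x s)"
    using set_integral_mono_set_nonneg[OF set_integrable_abs[OF uc_int] meas sub] ms
    by (simp add: divide_right_mono)
  finally show ?thesis by (simp add: c_def)
qed

lemma doubling_measure_ball_le: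
  fixes M :: "'a::metric_space measure"
  assumes "sets borel \<subseteq> sets M" "doubling_measure M"
  obtains D where "\<And>x r s. 0 < s \<Longrightarrow> r \<le> 2 * s \<Longrightarrow> measure M (ball x r) \<le> D * measure M (ball x s)"
proof -
  obtain D where D: "\<And>x s. s > 0 \<Longrightarrow> measure M (ball x (2 * s)) \<le> D * measure M (ball x s)"
    using assms(2) unfolding doubling_measure_def by blast
  have "measure M (ball x r) \<le> measure M (ball x (2 * s))" if "0 < s" "r \<le> 2 * s" for x r s
    using that assms doubling_measure_ball(2)[OF assms(2), of "2 * s" x]
    by (intro measure_mono_fmeasurable) (auto simp: fmeasurable_def)
  then show ?thesis using that D by (meson order_trans)
qed

text \<open>From the lower mass bound \<open>\<mu>(B(x,\<rho>)) \<ge> \<rho>^Q \<mu>(B(x,1)) / C\<close> for \<open>\<rho> \<le> 1\<close>.\<close>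
lemma Q_doubling_mean_powr_le:
  fixes M :: "'a::metric_space measure"
  assumes "Q_doubling Q M" "Q > 0"
  obtains D where "\<And>\<rho> I. 0 < \<rho> \<Longrightarrow> \<rho> \<le> 1 \<Longrightarrow> 0 \<le> I \<Longrightarrow>
      (I / measure M (ball x \<rho>)) powr (1/Q) \<le> D * I powr (1/Q) / \<rho>"
proof -
  obtain C where C: "C \<ge> 1" "\<And>a y r s. y \<in> ball a r \<Longrightarrow> 0 < s \<Longrightarrow> s \<le> r \<Longrightarrow>
      (s / r) powr Q \<le> C * measure M (ball y s) / measure M (ball a r)"
    using assms(1) unfolding Q_doubling_def by blast
  have D: "doubling_measure M" using assms(1) by (simp add: Q_doubling_def)
  define m1 where "m1 = measure M (ball x 1)"
  have m1: "m1 > 0" using doubling_measure_ball(1)[OF D] by (simp add: m1_def)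
  have "(I / measure M (ball x \<rho>)) powr (1/Q) \<le> (C / m1) powr (1/Q) * I powr (1/Q) / \<rho>"
    if \<rho>: "0 < \<rho>" "\<rho> \<le> 1" and I: "0 \<le> I" for \<rho> I
  proof -
    define m where "m = measure M (ball x \<rho>)"
    have m: "m > 0" using doubling_measure_ball(1)[OF D] \<rho> by (simp add: m_def)
    have "\<rho> powr Q \<le> C * m / m1" using C(2)[of x x 1 \<rho>] \<rho> by (simp add: m_def m1_def)
    then have "\<rho> powr Q * m1 / C \<le> m" using m1 C(1) by (simp add: field_simps)
    then have "I / m \<le> I / (\<rho> powr Q * m1 / C)"
      using m m1 C(1) \<rho> I by (intro divide_left_mono) auto
    then have "(I / m) powr (1/Q) \<le> (I / (\<rho> powr Q * m1 / C)) powr (1/Q)"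
      using m I \<open>Q > 0\<close> by (intro powr_mono2) auto
    also have "I / (\<rho> powr Q * m1 / C) = I * (C / m1) / \<rho> powr Q"
      using m1 C(1) by (simp add: field_simps)
    also have "(\<dots>) powr (1/Q) = (C / m1) powr (1/Q) * I powr (1/Q) / \<rho>"
      using m1 C(1) \<rho> I \<open>Q > 0\<close> by (simp add: powr_divide powr_mult powr_powr)
    finally show ?thesis by (simp add: m_def)
  qed
  then show ?thesis using that by blast
qed

lemma avg_ball_step_le:
  fixes M :: "'a::metric_space measure" and u g :: "'a \<Rightarrow> real" and Q C lam :: real
  assumes sb: "sets borel \<subseteq> sets M" and QD: "Q_doubling Q M"
    and u: "\<And>r. set_integrable M (ball x r) u" and "Q > 0" "C \<ge> 0" "lam > 0"
    and poincare: "\<And>r. r > 0 \<Longrightarrow>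
           (LINT y:ball x r|M. \<bar>u y - avg M (ball x r) u\<bar>) / measure M (ball x r)
           \<le> C * diameter (ball x r) *
             ((LINT y:ball x (lam * r)|M. g y powr Q) / measure M (ball x (lam * r))) powr (1 / Q)"
  obtains K where "\<And>r s. 0 < r \<Longrightarrow> r/2 \<le> s \<Longrightarrow> s \<le> r \<Longrightarrow> lam * r \<le> 1 \<Longrightarrow>
     \<bar>avg M (ball x s) u - avg M (ball x r) u\<bar> \<le> K * (LINT y:ball x (lam * r)|M. g y powr Q) powr (1/Q)"
proof -
  have D: "doubling_measure M" using QD by (simp add: Q_doubling_def)
  obtain D1 where D1: "\<And>r s. 0 < s \<Longrightarrow> r \<le> 2 * s \<Longrightarrow> measure M (ball x r) \<le> D1 * measure M (ball x s)"
    using doubling_measure_ball_le[OF sb D] by metis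
  obtain D2 where D2: "\<And>\<rho> I. 0 < \<rho> \<Longrightarrow> \<rho> \<le> 1 \<Longrightarrow> 0 \<le> I \<Longrightarrow>
      (I / measure M (ball x \<rho>)) powr (1/Q) \<le> D2 * I powr (1/Q) / \<rho>"
    using Q_doubling_mean_powr_le[OF QD \<open>Q > 0\<close>] by metis
  have "0 < measure M (ball x 1)" "measure M (ball x 1) \<le> D1 * measure M (ball x 1)"
    using D1[of 1 1] doubling_measure_ball[OF D] by auto
  then have "D1 \<ge> 1" by simp
  have "\<bar>avg M (ball x s) u - avg M (ball x r) u\<bar>
        \<le> (D1 * (2 * C * D2 / lam)) * (LINT y:ball x (lam * r)|M. g y powr Q) powr (1/Q)"
    if r: "0 < r" "r/2 \<le> s" "s \<le> r" "lam * r \<le> 1" for r s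
  proof -
    define I where "I = (LINT y:ball x (lam * r)|M. g y powr Q)"
    define osc where "osc = (LINT y:ball x r|M. \<bar>u y - avg M (ball x r) u\<bar>) / measure M (ball x r)"
    have s: "0 < s" using r by simp
    have m: "0 < measure M (ball x r)" "0 < measure M (ball x s)"
      using doubling_measure_ball(1)[OF D] r s by auto
    have "0 \<le> I" unfolding I_def set_lebesgue_integral_def by simp
    have "0 \<le> osc" unfolding osc_def set_lebesgue_integral_def using m by simp
    have "\<bar>avg M (ball x s) u - avg M (ball x r) u\<bar> \<le>
          (LINT y:ball x r|M. \<bar>u y - avg M (ball x r) u\<bar>) / measure M (ball x s)"
      using avg_ball_diff_le[OF sb D u s \<open>s \<le> r\<close>] .
    also have "\<dots> = measure M (ball x r) / measure M (ball x s) * osc"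
      using m by (simp add: osc_def)
    also have "\<dots> \<le> D1 * osc"
      using D1[of s r] r m \<open>0 \<le> osc\<close> by (intro mult_right_mono) (auto simp: field_simps)
    also have "osc \<le> C * (2 * r) * (D2 * I powr (1/Q) / (lam * r))"
    proof -
      have "osc \<le> C * diameter (ball x r) * (I / measure M (ball x (lam * r))) powr (1/Q)"
        using poincare[OF r(1)] by (simp add: osc_def I_def)
      also have "\<dots> \<le> C * (2 * r) * (D2 * I powr (1/Q) / (lam * r))"
        using D2[of "lam * r" I] diameter_ball_le[of r x] diameter_ge_0[of "ball x r"]
          r \<open>lam > 0\<close> \<open>0 \<le> I\<close> \<open>C \<ge> 0\<close>
        by (intro mult_mono) auto
      finally show ?thesis .
    qed
    also have "C * (2 * r) * (D2 * I powr (1/Q) / (lam * r)) = 2 * C * D2 / lam * I powr (1/Q)"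
      using r by (simp add: field_simps)
    finally show ?thesis using \<open>D1 \<ge> 1\<close> by (simp add: I_def mult.assoc mult_left_mono)
  qed
  then show ?thesis using that by blast
qed

section \<open>Convergence of the averages\<close>

lemma ex_dyadic_bracket:
  fixes r :: real
  assumes "0 < r" "r < (1/2)^N"
  obtains k where "k \<ge> N" "(1/2)^(Suc k) < r" "r \<le> (1/2)^k"
proof -
  define P where "P k \<longleftrightarrow> (1/2::real)^(Suc k) < r" for k
  obtain n where "(1/2::real)^n < r" using real_arch_pow_inv[of r "1/2::real"] assms by auto
  then have "P n" using assms by (simp add: P_def)
  define k where "k = (LEAST k. P k)"
  have "P k" unfolding k_def by (rule LeastI[of P n]) fact
  moreover have "r \<le> (1/2)^k"
  proof (cases k)
    case 0
    then show ?thesis using assms power_le_one[of "1/2::real" N] by simp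
  next
    case (Suc m)
    then show ?thesis using not_less_Least[of m P] by (simp add: P_def k_def)
  qed
  moreover have "N \<le> k"
  proof (rule ccontr)
    assume "\<not> N \<le> k"
    then have "(1/2::real)^N \<le> (1/2)^(Suc k)" by (intro power_decreasing) auto
    then show False using \<open>P k\<close> assms by (simp add: P_def)
  qed
  ultimately show ?thesis using that by (simp add: P_def)
qed

text \<open>Telescoping along the radii \<open>2^-k\<close>: the dyadic values converge since their increments are
  summable, and every small radius lies within one step of a dyadic one.\<close>
lemma ex_tendsto_at_right_0_of_dyadic_steps:
  fixes A \<Phi> :: "real \<Rightarrow> real" and K R :: real
  assumes "R > 0" and summ: "summable (\<lambda>k. \<Phi> ((1/2)^k))"
    and step: "\<And>r s. 0 < r \<Longrightarrow> r/2 \<le> s \<Longrightarrow> s \<le> r \<Longrightarrow> r \<le> R \<Longrightarrow> \<bar>A s - A r\<bar> \<le> K * \<Phi> r"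
  shows "\<exists>L. (A \<longlongrightarrow> L) (at_right 0)"
proof -
  define a where "a k = A ((1/2)^k)" for k
  obtain k0 where k0: "(1/2::real)^k0 < R" using real_arch_pow_inv[of R "1/2::real"] assms by auto
  have small: "(1/2::real)^k \<le> R" if "k \<ge> k0" for k
  proof -
    have "(1/2::real)^k \<le> (1/2)^k0" by (rule power_decreasing[OF that]) auto
    with k0 show ?thesis by linarith
  qed
  have "\<forall>\<^sub>F k in sequentially. norm (a (Suc k) - a k) \<le> K * \<Phi> ((1/2)^k)"
    using eventually_ge_at_top[of k0]
  proof (rule eventually_mono)
    fix k assume "k \<ge> k0"
    then show "norm (a (Suc k) - a k) \<le> K * \<Phi> ((1/2)^k)"
      using step[of "(1/2)^k" "(1/2)^Suc k"] small[of k] by (simp add: a_def)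
  qed
  then have "summable (\<lambda>k. a (Suc k) - a k)"
    using summable_mult[OF summ] by (rule summable_comparison_test_ev)
  then have "(\<lambda>n. a 0 + (\<Sum>k<n. a (Suc k) - a k)) \<longlonglongrightarrow> a 0 + (\<Sum>k. a (Suc k) - a k)"
    by (intro tendsto_add tendsto_const summable_LIMSEQ)
  then have a_lim: "a \<longlonglongrightarrow> L" if "L = a 0 + (\<Sum>k. a (Suc k) - a k)" for L
    using that by (simp add: sum_lessThan_telescope)
  define L where "L = a 0 + (\<Sum>k. a (Suc k) - a k)"
  have step_lim: "(\<lambda>k. K * \<Phi> ((1/2)^k)) \<longlonglongrightarrow> 0"
    using summable_LIMSEQ_zero[OF summable_mult[OF summ, of K]] .
  have "(A \<longlongrightarrow> L) (at_right 0)"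
  proof (rule tendstoI)
    fix e :: real assume "e > 0"
    have "\<forall>\<^sub>F k in sequentially. dist (a k) L < e/2 \<and> \<bar>K * \<Phi> ((1/2)^k)\<bar> < e/2 \<and> k \<ge> k0"
      using tendstoD[OF a_lim[OF L_def], of "e/2"] tendstoD[OF step_lim, of "e/2"] \<open>e > 0\<close>
      by (intro eventually_conj eventually_ge_at_top) simp_all
    then obtain N where N: "\<And>k. k \<ge> N \<Longrightarrow> dist (a k) L < e/2 \<and> \<bar>K * \<Phi> ((1/2)^k)\<bar> < e/2 \<and> k \<ge> k0"
      by (auto simp: eventually_sequentially)
    show "\<forall>\<^sub>F r in at_right 0. dist (A r) L < e"
      unfolding eventually_at_right_field
    proof (intro exI[of _ "(1/2)^N"] conjI allI impI)
      fix r :: real assume "0 < r" "r < (1/2)^N"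
      then obtain k where k: "k \<ge> N" "(1/2)^(Suc k) < r" "r \<le> (1/2)^k"
        by (rule ex_dyadic_bracket)
      have "\<bar>A r - a k\<bar> \<le> K * \<Phi> ((1/2)^k)"
        using step[of "(1/2)^k" r] k small N[OF k(1)] by (simp add: a_def)
      then show "dist (A r) L < e"
        using N[OF k(1)] abs_triangle_ineq[of "A r - a k" "a k - L"] by (simp add: dist_real_def)
    qed simp
  qed
  then show ?thesis by blast
qed

text \<open>Cauchy condensation: the condensed terms \<open>2^j I(lam 2^(-2^j))^(1/Q)\<close> are eventually
  bounded by the geometric sequence \<open>2^(-\<epsilon> j / (2 Q))\<close>.\<close>
lemma summable_dyadic_powr_of_condensed_bound:
  fixes I :: "real \<Rightarrow> real" and Q \<epsilon> lam :: real
  assumes "Q > 0" "\<epsilon> > 0" "lam > 0"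
    and I_nonneg: "\<And>\<rho>. I \<rho> \<ge> 0" and I_mono: "\<And>\<rho> \<rho>'. 0 < \<rho> \<Longrightarrow> \<rho> \<le> \<rho>' \<Longrightarrow> I \<rho> \<le> I \<rho>'"
    and small: "\<forall>\<^sub>F j in sequentially. I (lam * (1/2)^(2^j)) < 2 powr (-(Q + \<epsilon>/2) * real j)"
  shows "summable (\<lambda>k. I (lam * (1/2)^k) powr (1/Q))"
proof -
  define f where "f k = I (lam * (1/2)^k) powr (1/Q)" for k :: nat
  have f_mono: "f (Suc k) \<le> f k" for k
    unfolding f_def using I_mono[of "lam * (1/2)^(Suc k)" "lam * (1/2)^k"] I_nonneg \<open>lam > 0\<close> \<open>Q > 0\<close>
    by (intro powr_mono2) auto
  define q where "q = 2 powr (-(\<epsilon>/(2*Q)))"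
  have "norm q < 1" unfolding q_def using \<open>\<epsilon> > 0\<close> \<open>Q > 0\<close> by (simp add: powr_minus field_simps)
  moreover have "\<forall>\<^sub>F j in sequentially. norm (2^j * f (2^j)) \<le> q^j"
    using small
  proof (rule eventually_mono)
    fix j :: nat assume j: "I (lam * (1/2)^(2^j)) < 2 powr (-(Q + \<epsilon>/2) * real j)"
    have "f (2^j) \<le> (2 powr (-(Q + \<epsilon>/2) * real j)) powr (1/Q)"
      unfolding f_def using j I_nonneg \<open>Q > 0\<close> by (intro powr_mono2) auto
    then have "2^j * f (2^j) \<le> 2 powr (real j + (-(Q + \<epsilon>/2) * real j / Q))"
      by (simp add: powr_powr powr_add powr_realpow)
    also have "real j + (-(Q + \<epsilon>/2) * real j / Q) = real j * (-(\<epsilon>/(2*Q)))"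
      using \<open>Q > 0\<close> by (simp add: field_simps)
    finally show "norm (2^j * f (2^j)) \<le> q^j"
      by (simp add: f_def q_def powr_power)
  qed
  ultimately have "summable (\<lambda>j. 2^j * f (2^j))"
    by (intro summable_comparison_test_ev[OF _ summable_geometric])
  then have "summable f"
    using condensation_test[of f] f_mono by (simp add: f_def)
  then show ?thesis by (simp add: f_def[abs_def])
qed

lemma set_integral_ball_mono:
  fixes M :: "'a::metric_space measure" and f :: "'a \<Rightarrow> real"
  assumes "integrable M f" "\<And>x. f x \<ge> 0" "sets borel \<subseteq> sets M" "\<rho> \<le> \<rho>'"
  shows "(LINT y:ball x \<rho>|M. f y) \<le> (LINT y:ball x \<rho>'|M. f y)"
proof (rule set_integral_mono_set_nonneg)
  have "ball x \<rho>' \<in> sets M" using assms(3) by auto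
  then show "set_integrable M (ball x \<rho>') f"
    using integrable_mult_indicator[OF _ assms(1)] by (simp add: set_integrable_def)
qed (use assms in auto)

theorem mainTheorem2:
  fixes M :: "'a::metric_space measure" and Q \<epsilon> C lam :: real
    and u g :: "'a \<Rightarrow> real"
  assumes "Q > 1" and "\<epsilon> > 0"
    and "space M = UNIV" and "sets borel \<subseteq> sets M"
    and "Q_doubling Q M"
    and "\<And>x r. set_integrable M (ball x r) u"
    and "g \<in> borel_measurable M" and "\<And>x. g x \<ge> 0" and "integrable M (\<lambda>x. g x powr Q)"
    and "C > 0" and "lam \<ge> 1"
    and "\<And>x r. r > 0 \<Longrightarrow>
           (LINT y:ball x r|M. \<bar>u y - avg M (ball x r) u\<bar>) / measure M (ball x r)
           \<le> C * diameter (ball x r) *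
             ((LINT y:ball x (lam * r)|M. g y powr Q) / measure M (ball x (lam * r))) powr (1 / Q)"
  shows "\<exists>E. hausdorff_h (log_gauge Q \<epsilon>) E = 0 \<and>
           (\<forall>x \<in> UNIV - E. \<exists>L. ((\<lambda>r. avg M (ball x r) u) \<longlongrightarrow> L) (at_right 0))"
proof -
  have "Q > 0" "lam > 0" using assms(1,11) by simp_all
  define I where "I x \<rho> = (LINT y:ball x \<rho>|M. g y powr Q)" for x \<rho>
  define E where "E = {x. \<exists>\<^sub>F j in sequentially. 2 powr (-(Q + \<epsilon>/2) * real j) \<le> I x (lam * (1/2)^(2^j))}"
  have "hausdorff_h (log_gauge Q \<epsilon>) E = 0"
    unfolding E_def I_def using assms(2,4,9,11) \<open>Q > 0\<close> by (intro hausdorff_h_heavy_points_eq_0) auto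
  moreover have "\<exists>L. ((\<lambda>r. avg M (ball x r) u) \<longlongrightarrow> L) (at_right 0)" if "x \<notin> E" for x
  proof -
    have "I x \<rho> \<le> I x \<rho>'" if "\<rho> \<le> \<rho>'" for \<rho> \<rho>'
      unfolding I_def using assms(4,9) that by (intro set_integral_ball_mono) auto
    moreover have "I x \<rho> \<ge> 0" for \<rho>
      unfolding I_def set_lebesgue_integral_def by simp
    ultimately have "summable (\<lambda>k. I x (lam * (1/2)^k) powr (1/Q))"
      using \<open>x \<notin> E\<close> \<open>\<epsilon> > 0\<close> \<open>Q > 0\<close> \<open>lam > 0\<close>
      by (intro summable_dyadic_powr_of_condensed_bound) (auto simp: E_def not_frequently not_le)
    moreover obtain K where "\<And>r s. 0 < r \<Longrightarrow> r/2 \<le> s \<Longrightarrow> s \<le> r \<Longrightarrow> lam * r \<le> 1 \<Longrightarrow>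
        \<bar>avg M (ball x s) u - avg M (ball x r) u\<bar> \<le> K * I x (lam * r) powr (1/Q)"
      using avg_ball_step_le[OF assms(4,5,6) \<open>Q > 0\<close> _ \<open>lam > 0\<close> assms(12)] assms(10)
      unfolding I_def by (metis less_imp_le)
    ultimately show ?thesis
      using \<open>lam > 0\<close>
      by (intro ex_tendsto_at_right_0_of_dyadic_steps[where \<Phi> = "\<lambda>r. I x (lam * r) powr (1/Q)" and R = "1/lam"])
         (auto simp: field_simps)
  qed
  ultimately show ?thesis by blast
qed

end
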